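(* Let $B=B_0+B_1$ be a unital associative superalgebra and let $Z=Z(B)_0$ be the even part of its center. Assume that the nonzero elements of $Z$ are not zero divisors of $B$, and let $A=Z^{-1}B$ be the central closure of $B$, a superalgebra over the field $k=Z^{-1}Z$. If the superalgebra $A$ is simple and finite dimensional over $k$, then $B$ embeds, as a $Z$-module, into a free finitely generated $Z$-module.
   Context: A superalgebra is a $\mathbb{Z}_2$-graded algebra $B=B_0\oplus B_1$, where $B_0$ is the even part and $B_1$ is the odd part. For elements $x,y,z$ write $(x,y,z)=(xy)z-x(yz)$ and $[x,y]=xy-yx$. The center of a (super)algebra $B$ is $Z(B)=\{x\in B\mid (x,a,b)=(a,x,b)=(a,b,x)=[a,x]=0 \text{ for all } a,b\in B\}$, and $Z(B)_0=Z(B)\cap B_0$ is its even part. $Z^{-1}B$ denotes the localization of $B$ at $Z\setminus\{0\}$, which contains $B$ under the stated assumption, and $Z^{-1}Z$ is the field of fractions of $Z$. A superalgebra is simple if it has no graded ideals other than $0$ and itself and its product is nonzero. *)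

theory Defs
  imports Main
begin

text \<open>A unital associative (super)algebra is modelled as a type of class ring_1
  (viewed as an algebra over its prime ring; ideals of a unital algebra are
  automatically subspaces).\<close>

definition add_subgroup :: "'b::ring_1 set \<Rightarrow> bool" where
  "add_subgroup S \<longleftrightarrow> 0 \<in> S \<and> (\<forall>x\<in>S. \<forall>y\<in>S. x + y \<in> S) \<and> (\<forall>x\<in>S. - x \<in> S)"

definition superalgebra :: "'b::ring_1 set \<Rightarrow> 'b set \<Rightarrow> bool" where
  "superalgebra B0 B1 \<longleftrightarrow>
     add_subgroup B0 \<and> add_subgroup B1 \<and>
     (\<forall>x. \<exists>x0\<in>B0. \<exists>x1\<in>B1. x = x0 + x1) \<and> B0 \<inter> B1 = {0} \<and>
     (\<forall>x\<in>B0. \<forall>y\<in>B0. x * y \<in> B0) \<and> (\<forall>x\<in>B0. \<forall>y\<in>B1. x * y \<in> B1) \<and>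
     (\<forall>x\<in>B1. \<forall>y\<in>B0. x * y \<in> B1) \<and> (\<forall>x\<in>B1. \<forall>y\<in>B1. x * y \<in> B0)"

text \<open>Center, literally as in the paper: (x,a,b)=(a,x,b)=(a,b,x)=[a,x]=0.\<close>
definition center :: "'b::ring_1 set" where
  "center = {x. \<forall>a b. (x * a) * b - x * (a * b) = 0 \<and> (a * x) * b - a * (x * b) = 0 \<and>
                        (a * b) * x - a * (b * x) = 0 \<and> a * x - x * a = 0}"

text \<open>phi : B -> A exhibits A as the localization Z^{-1}B (Z central, regular):
  phi is an injective unital ring homomorphism, every phi z (z in Z, z /= 0) is
  invertible in A, and every element of A has the form phi b * (phi z)^{-1}.\<close>
definition is_localization :: "'b::ring_1 set \<Rightarrow> ('b \<Rightarrow> 'a::ring_1) \<Rightarrow> bool" where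
  "is_localization Z \<phi> \<longleftrightarrow>
     inj \<phi> \<and> \<phi> 1 = 1 \<and> (\<forall>x y. \<phi> (x + y) = \<phi> x + \<phi> y \<and> \<phi> (x * y) = \<phi> x * \<phi> y) \<and>
     (\<forall>z\<in>Z - {0}. \<exists>w. w * \<phi> z = 1 \<and> \<phi> z * w = 1) \<and>
     (\<forall>a. \<exists>b. \<exists>z\<in>Z - {0}. a * \<phi> z = \<phi> b)"

text \<open>Z^{-1}S inside A: elements phi s * (phi z)^{-1}, s in S, z in Z - {0}.\<close>
definition loc_part :: "'b::ring_1 set \<Rightarrow> ('b \<Rightarrow> 'a::ring_1) \<Rightarrow> 'b set \<Rightarrow> 'a set" where
  "loc_part Z \<phi> S = {a. \<exists>s\<in>S. \<exists>z\<in>Z - {0}. a * \<phi> z = \<phi> s}"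

definition graded_ideal :: "'a::ring_1 set \<Rightarrow> 'a set \<Rightarrow> 'a set \<Rightarrow> bool" where
  "graded_ideal A0 A1 I \<longleftrightarrow>
     add_subgroup I \<and> (\<forall>x\<in>I. \<forall>a. a * x \<in> I \<and> x * a \<in> I) \<and>
     (\<forall>x\<in>I. \<forall>x0\<in>A0. \<forall>x1\<in>A1. x = x0 + x1 \<longrightarrow> x0 \<in> I \<and> x1 \<in> I)"

definition simple_superalgebra :: "'a::ring_1 set \<Rightarrow> 'a set \<Rightarrow> bool" where
  "simple_superalgebra A0 A1 \<longleftrightarrow>
     superalgebra A0 A1 \<and> (\<exists>x y. x * y \<noteq> (0::'a)) \<and>
     (\<forall>I. graded_ideal A0 A1 I \<longrightarrow> I = {0} \<or> I = UNIV)"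

definition fin_dim_over :: "'a::ring_1 set \<Rightarrow> bool" where
  "fin_dim_over k \<longleftrightarrow>
     (\<exists>S. finite S \<and> (\<forall>a. \<exists>c. (\<forall>s\<in>S. c s \<in> k) \<and> a = (\<Sum>s\<in>S. c s * s)))"

end

theory Submission
  imports Defs
begin

(* The even centre k = Z^{-1}Z of the simple superalgebra A is a field over which A is finite
   dimensional. Among the nonzero operators in the algebra generated by the left and right
   multiplications and the even projection of A, choose g whose image has minimal k-dimension;
   then every operator of that algebra vanishing at one nonzero value g x vanishes on the whole
   image of g. By simplicity some operator n sends g x to 1, and comparing n followed by a left
   resp. right multiplication, and n followed by the even projection, shows that t = n o g takes
   values in k. The elements x with t (a x_0 a') = t (a x_1 a') = 0 for all a, a' form a proper
   graded ideal, hence only 0. After clearing a common denominator z0 of t on B and choosing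
   e_1, ..., e_m in B whose images span A over k, the Z-linear forms b |-> z0 t (e_i b_p e_j),
   p = 0, 1, take values in Z and jointly separate the points of B. *)

lemma center_iff: "x \<in> center \<longleftrightarrow> (\<forall>a. a * x = x * a)"
  by (simp add: center_def mult.assoc)

lemma inverse_in_center:
  assumes "c \<in> center" and "w * c = 1" and "c * w = 1"
  shows "w \<in> center"
proof -
  have "w * x = x * w" for x
  proof -
    have "w * x = w * x * (c * w)" using assms(3) by simp
    also have "\<dots> = w * (c * x) * w" using assms(1) by (metis center_iff mult.assoc)
    also have "\<dots> = x * w" using assms(2) by (simp add: mult.assoc[symmetric])
    finally show ?thesis .
  qed
  then show ?thesis by (simp add: center_iff)
qed

lemma center_mult:
  assumes "x \<in> center" and "y \<in> center"
  shows "x * y \<in> center"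
  using assms unfolding center_iff by (metis mult.assoc)

definition linear_over :: "'a::ring_1 set \<Rightarrow> ('a \<Rightarrow> 'a) \<Rightarrow> bool" where
  "linear_over K f \<longleftrightarrow> (\<forall>x y. f (x + y) = f x + f y) \<and> (\<forall>c\<in>K. \<forall>x. f (c * x) = c * f x)"

definition span_over :: "'a::ring_1 set \<Rightarrow> 'i set \<Rightarrow> ('i \<Rightarrow> 'a) \<Rightarrow> 'a set" where
  "span_over K I v = {y. \<exists>c. (\<forall>i\<in>I. c i \<in> K) \<and> y = (\<Sum>i\<in>I. c i * v i)}"

lemma span_overI: "y = (\<Sum>i\<in>I. c i * v i) \<Longrightarrow> \<forall>i\<in>I. c i \<in> K \<Longrightarrow> y \<in> span_over K I v"
  unfolding span_over_def by blast

lemma fin_dim_over_iff: "fin_dim_over K \<longleftrightarrow> (\<exists>S. finite S \<and> UNIV \<subseteq> span_over K S (\<lambda>s. s))"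
  unfolding fin_dim_over_def span_over_def by auto

lemma linear_overD:
  assumes "linear_over K f"
  shows "f (x + y) = f x + f y" and "c \<in> K \<Longrightarrow> f (c * x) = c * f x"
  using assms unfolding linear_over_def by auto

lemma linear_over_zero: "linear_over K f \<Longrightarrow> f 0 = 0"
  using linear_overD(1)[of K f 0 0] by simp

lemma linear_over_uminus: "linear_over K f \<Longrightarrow> f (- x) = - f x"
  using linear_overD(1)[of K f x "- x"] linear_over_zero[of K f] by (simp add: add_eq_0_iff2)

lemma linear_over_sum:
  assumes "linear_over K f" and "finite I" and "\<forall>i\<in>I. c i \<in> K"
  shows "f (\<Sum>i\<in>I. c i * v i) = (\<Sum>i\<in>I. c i * f (v i))"
  using assms(2,3)
proof (induction I rule: finite_induct)
  case empty
  then show ?case using linear_over_zero[OF assms(1)] by simp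
next
  case (insert i I)
  then show ?case using linear_overD[OF assms(1)] by simp
qed

lemma linear_over_image_span:
  assumes "linear_over K f" and "finite I" and "y \<in> span_over K I v"
  shows "f y \<in> span_over K I (\<lambda>i. f (v i))"
  using assms linear_over_sum unfolding span_over_def by blast

lemma linear_over_vanishes_on_span:
  assumes "linear_over K h" and "finite S" and "y \<in> span_over K S v"
    and "\<And>s. s \<in> S \<Longrightarrow> h (v s) = 0"
  shows "h y = 0"
proof -
  have "h y \<in> span_over K S (\<lambda>s. h (v s))" using linear_over_image_span assms(1-3) .
  then show ?thesis using assms(4) unfolding span_over_def by auto
qed

lemma linear_over_sandwich_span:
  assumes lin: "linear_over K t" and K: "K \<subseteq> center" and S: "finite S"
    and span: "UNIV \<subseteq> span_over K S v"
    and vanish: "\<And>s s'. s \<in> S \<Longrightarrow> s' \<in> S \<Longrightarrow> t (v s * x * v s') = 0"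
  shows "t (a * x * a') = 0"
proof -
  have right: "t (v s * x * y) = 0" if "s \<in> S" for s y
  proof (rule linear_over_vanishes_on_span[where h = "\<lambda>y. t (v s * x * y)", OF _ S])
    have "v s * x * (c * y) = c * (v s * x * y)" if "c \<in> K" for c y
      using K that by (metis center_iff mult.assoc subsetD)
    then show "linear_over K (\<lambda>y. t (v s * x * y))"
      using lin unfolding linear_over_def by (simp add: distrib_left)
  qed (use that vanish span in auto)
  show ?thesis
  proof (rule linear_over_vanishes_on_span[where h = "\<lambda>y. t (y * x * a')", OF _ S])
    show "linear_over K (\<lambda>y. t (y * x * a'))"
      using lin unfolding linear_over_def by (auto simp: distrib_right mult.assoc)
  qed (use right span in auto)
qed

lemma embedding_into_free_module:
  fixes \<tau> :: "'i \<Rightarrow> 'b::ring_1 \<Rightarrow> 'b" and Z :: "'b set"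
  assumes I: "finite I"
    and valued: "\<And>i b. i \<in> I \<Longrightarrow> \<tau> i b \<in> Z"
    and additive: "\<And>i b c. i \<in> I \<Longrightarrow> \<tau> i (b + c) = \<tau> i b + \<tau> i c"
    and homogeneous: "\<And>i z b. i \<in> I \<Longrightarrow> z \<in> Z \<Longrightarrow> \<tau> i (z * b) = z * \<tau> i b"
    and separating: "\<And>b. (\<And>i. i \<in> I \<Longrightarrow> \<tau> i b = 0) \<Longrightarrow> b = 0"
  shows "\<exists>(n::nat) (f :: 'b \<Rightarrow> nat \<Rightarrow> 'b).
           (\<forall>b i. i < n \<longrightarrow> f b i \<in> Z) \<and> (\<forall>b i. n \<le> i \<longrightarrow> f b i = 0) \<and>
           (\<forall>b c i. f (b + c) i = f b i + f c i) \<and>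
           (\<forall>z\<in>Z. \<forall>b i. f (z * b) i = z * f b i) \<and>
           inj f"
proof -
  obtain xs where xs: "set xs = I" using finite_list[OF I] by blast
  define f where "f b k = (if k < length xs then \<tau> (xs ! k) b else 0)" for b k
  have "inj f"
  proof (rule injI)
    fix b c assume "f b = f c"
    have "\<tau> i (b - c) = 0" if i: "i \<in> I" for i
    proof -
      have "i \<in> set xs" using i xs by simp
      then obtain k where "k < length xs" "i = xs ! k" by (auto simp: in_set_conv_nth)
      then have "\<tau> i b = \<tau> i c" using \<open>f b = f c\<close> unfolding f_def by metis
      moreover have "\<tau> i b = \<tau> i (b - c) + \<tau> i c" using additive[OF i, of "b - c" c] by simp
      ultimately show ?thesis by simp
    qed
    then show "b = c" using separating[of "b - c"] by simp
  qed
  moreover have "xs ! k \<in> I" if "k < length xs" for k using that xs nth_mem by blast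
  ultimately show ?thesis
    by (intro exI[of _ "length xs"] exI[of _ f]) (auto simp: f_def valued additive homogeneous)
qed

section \<open>Superrings and their graded multiplication operators\<close>

locale super_ring =
  fixes B0 B1 :: "'b::ring_1 set"
  assumes superalgebra: "superalgebra B0 B1"
begin

lemma
  shows even_zero: "0 \<in> B0"
    and even_add: "x \<in> B0 \<Longrightarrow> y \<in> B0 \<Longrightarrow> x + y \<in> B0"
    and even_uminus: "x \<in> B0 \<Longrightarrow> - x \<in> B0"
    and odd_zero: "0 \<in> B1"
    and odd_add: "x \<in> B1 \<Longrightarrow> y \<in> B1 \<Longrightarrow> x + y \<in> B1"
    and odd_uminus: "x \<in> B1 \<Longrightarrow> - x \<in> B1"
    and decomposition: "\<exists>x0\<in>B0. \<exists>x1\<in>B1. x = x0 + x1"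
    and even_inter_odd: "B0 \<inter> B1 = {0}"
    and even_mult_even: "x \<in> B0 \<Longrightarrow> y \<in> B0 \<Longrightarrow> x * y \<in> B0"
    and even_mult_odd: "x \<in> B0 \<Longrightarrow> y \<in> B1 \<Longrightarrow> x * y \<in> B1"
    and odd_mult_even: "x \<in> B1 \<Longrightarrow> y \<in> B0 \<Longrightarrow> x * y \<in> B1"
    and odd_mult_odd: "x \<in> B1 \<Longrightarrow> y \<in> B1 \<Longrightarrow> x * y \<in> B0"
  using superalgebra unfolding superalgebra_def add_subgroup_def by auto

lemma decomposition_unique:
  assumes "x0 \<in> B0" "x1 \<in> B1" "y0 \<in> B0" "y1 \<in> B1" and "x0 + x1 = y0 + y1"
  shows "x0 = y0 \<and> x1 = y1"
proof -
  have "x0 - y0 = y1 - x1" using assms(5) by (simp add: algebra_simps)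
  moreover have "x0 - y0 \<in> B0" using assms(1,3) by (metis diff_conv_add_uminus even_add even_uminus)
  moreover have "y1 - x1 \<in> B1" using assms(2,4) by (metis diff_conv_add_uminus odd_add odd_uminus)
  ultimately have "x0 - y0 \<in> B0 \<inter> B1" by simp
  then have "x0 - y0 = 0" using even_inter_odd by simp
  then show ?thesis using assms(5) by simp
qed

definition even_part :: "'b \<Rightarrow> 'b" where
  "even_part x = (SOME x0. x0 \<in> B0 \<and> x - x0 \<in> B1)"

definition odd_part :: "'b \<Rightarrow> 'b" where
  "odd_part x = x - even_part x"

lemma even_part_mem: "even_part x \<in> B0" and odd_part_mem: "odd_part x \<in> B1"
proof -
  obtain x0 x1 where "x0 \<in> B0" "x1 \<in> B1" "x = x0 + x1" using decomposition by blast
  then have "\<exists>x0. x0 \<in> B0 \<and> x - x0 \<in> B1" by (intro exI[of _ x0]) simp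
  then have "even_part x \<in> B0 \<and> odd_part x \<in> B1"
    unfolding even_part_def odd_part_def by (rule someI_ex)
  then show "even_part x \<in> B0" "odd_part x \<in> B1" by auto
qed

lemma even_odd_sum: "even_part x + odd_part x = x"
  by (simp add: odd_part_def)

lemma parts_eqI:
  assumes "x0 \<in> B0" "x1 \<in> B1" and "x = x0 + x1"
  shows "even_part x = x0 \<and> odd_part x = x1"
  using decomposition_unique[OF even_part_mem[of x] odd_part_mem[of x] assms(1,2)]
  by (simp add: even_odd_sum assms(3)[symmetric])

lemma parts_of_even: "x \<in> B0 \<Longrightarrow> even_part x = x \<and> odd_part x = 0"
  by (rule parts_eqI) (simp_all add: odd_zero)

lemma parts_of_odd: "x \<in> B1 \<Longrightarrow> even_part x = 0 \<and> odd_part x = x"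
  by (rule parts_eqI) (simp_all add: even_zero)

lemma even_part_add: "even_part (x + y) = even_part x + even_part y"
  and odd_part_add: "odd_part (x + y) = odd_part x + odd_part y"
proof -
  have "x + y = (even_part x + even_part y) + (odd_part x + odd_part y)"
    by (simp add: odd_part_def algebra_simps)
  from parts_eqI[OF even_add[OF even_part_mem even_part_mem] odd_add[OF odd_part_mem odd_part_mem] this]
  show "even_part (x + y) = even_part x + even_part y"
    and "odd_part (x + y) = odd_part x + odd_part y" by simp_all
qed

lemma even_part_uminus: "even_part (- x) = - even_part x"
  and odd_part_uminus: "odd_part (- x) = - odd_part x"
proof -
  have "- x = - even_part x + - odd_part x"
    by (simp add: odd_part_def)
  from parts_eqI[OF even_uminus[OF even_part_mem] odd_uminus[OF odd_part_mem] this]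
  show "even_part (- x) = - even_part x" and "odd_part (- x) = - odd_part x" by simp_all
qed

lemma even_part_mult: "even_part (x * y) = even_part x * even_part y + odd_part x * odd_part y"
  and odd_part_mult: "odd_part (x * y) = even_part x * odd_part y + odd_part x * even_part y"
proof -
  have "x * y = (even_part x + odd_part x) * (even_part y + odd_part y)"
    by (simp add: even_odd_sum)
  then have "x * y = (even_part x * even_part y + odd_part x * odd_part y)
      + (even_part x * odd_part y + odd_part x * even_part y)"
    by (simp add: algebra_simps)
  moreover have "even_part x * even_part y + odd_part x * odd_part y \<in> B0"
    by (intro even_add even_mult_even odd_mult_odd even_part_mem odd_part_mem)
  moreover have "even_part x * odd_part y + odd_part x * even_part y \<in> B1"
    by (intro odd_add even_mult_odd odd_mult_even even_part_mem odd_part_mem)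
  ultimately have "even_part (x * y) = even_part x * even_part y + odd_part x * odd_part y
      \<and> odd_part (x * y) = even_part x * odd_part y + odd_part x * even_part y"
    by (intro parts_eqI)
  then show "even_part (x * y) = even_part x * even_part y + odd_part x * odd_part y"
    and "odd_part (x * y) = even_part x * odd_part y + odd_part x * even_part y" by simp_all
qed

lemma parts_even_mult:
  assumes "c \<in> B0"
  shows "even_part (c * x) = c * even_part x" and "odd_part (c * x) = c * odd_part x"
  using parts_of_even[OF assms] by (simp_all add: even_part_mult odd_part_mult)

lemma one_even: "1 \<in> B0"
proof -
  define e0 e1 where "e0 = even_part 1" and "e1 = odd_part (1::'b)"
  have e0: "e0 \<in> B0" and e1: "e1 \<in> B1"
    by (simp_all add: e0_def e1_def even_part_mem odd_part_mem)
  have one: "1 = e0 + e1" by (simp add: e0_def e1_def even_odd_sum)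
  have split: "y = y * e0 + y * e1" for y
    by (metis distrib_left mult.right_neutral one)
  have "e0 * e1 = 0"
    using parts_eqI[OF even_mult_even[OF e0 e0] even_mult_odd[OF e0 e1] split[of e0]]
      parts_of_even[OF e0] by simp
  moreover have "e1 * e1 = 0"
    using parts_eqI[OF odd_mult_odd[OF e1 e1] odd_mult_even[OF e1 e0], of e1]
      split[of e1] parts_of_odd[OF e1] by (simp add: add.commute)
  ultimately have "e1 = 0"
    by (metis distrib_right mult_1 one add_0)
  then show ?thesis using e0 one by simp
qed

abbreviation even_center :: "'b set" where
  "even_center \<equiv> center \<inter> B0"

lemma even_center_one: "1 \<in> even_center"
  using one_even by (simp add: center_def)

lemma even_center_add:
  assumes "x \<in> even_center" and "y \<in> even_center"
  shows "x + y \<in> even_center"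
proof -
  have "a * (x + y) = (x + y) * a" for a
    using assms unfolding Int_iff center_iff by (simp add: distrib_left distrib_right)
  then show ?thesis using assms even_add unfolding Int_iff center_iff by blast
qed

lemma even_center_uminus: "x \<in> even_center \<Longrightarrow> - x \<in> even_center"
  using even_uminus unfolding Int_iff center_iff by simp

lemma even_center_mult: "x \<in> even_center \<Longrightarrow> y \<in> even_center \<Longrightarrow> x * y \<in> even_center"
  using center_mult even_mult_even by blast

(* The even projection is included so that orbits of elements are graded. *)
inductive_set mult_ops :: "('b \<Rightarrow> 'b) set" where
  mult_left: "(\<lambda>x. a * x) \<in> mult_ops"
| mult_right: "(\<lambda>x. x * a) \<in> mult_ops"
| even_proj: "even_part \<in> mult_ops"
| comp: "f \<in> mult_ops \<Longrightarrow> g \<in> mult_ops \<Longrightarrow> (\<lambda>x. f (g x)) \<in> mult_ops"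
| add: "f \<in> mult_ops \<Longrightarrow> g \<in> mult_ops \<Longrightarrow> (\<lambda>x. f x + g x) \<in> mult_ops"

lemma mult_ops_linear: "f \<in> mult_ops \<Longrightarrow> linear_over even_center f"
proof (induction rule: mult_ops.induct)
  case (mult_left a)
  have "a * (c * x) = c * (a * x)" if "c \<in> even_center" for c x
    using that by (metis IntD1 center_iff mult.assoc)
  then show ?case unfolding linear_over_def by (simp add: distrib_left)
next
  case (mult_right a)
  then show ?case unfolding linear_over_def by (simp add: distrib_right mult.assoc)
next
  case even_proj
  then show ?case unfolding linear_over_def by (simp add: even_part_add parts_even_mult)
next
  case (comp f g)
  then show ?case unfolding linear_over_def by simp
next
  case (add f g)
  then show ?case unfolding linear_over_def by (simp add: algebra_simps)
qed

lemma mult_ops_id: "(\<lambda>x. x) \<in> mult_ops"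
proof -
  have "(\<lambda>x::'b. x) = (\<lambda>x. 1 * x)" by simp
  then show ?thesis using mult_ops.mult_left by metis
qed

lemma mult_ops_diff: "f \<in> mult_ops \<Longrightarrow> g \<in> mult_ops \<Longrightarrow> (\<lambda>x. f x - g x) \<in> mult_ops"
  using mult_ops.add[OF _ mult_ops.comp[OF mult_ops.mult_left[of "- 1"]], of f g] by simp

lemma mult_ops_odd_proj: "odd_part \<in> mult_ops"
  using mult_ops_diff[OF mult_ops_id mult_ops.even_proj] by (simp add: odd_part_def[abs_def])

definition sandwich_kernel :: "('b \<Rightarrow> 'b) \<Rightarrow> 'b set" where
  "sandwich_kernel t = {x. \<forall>a a'. t (a * even_part x * a') = 0 \<and> t (a * odd_part x * a') = 0}"

lemma sandwich_kernel_mult: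
  assumes t: "t \<in> mult_ops" and x: "x \<in> sandwich_kernel t"
  shows "b * x \<in> sandwich_kernel t" and "x * b \<in> sandwich_kernel t"
proof -
  note t_add = linear_overD(1)[OF mult_ops_linear[OF t]]
  have x0: "t (a * even_part x * a') = 0" and x1: "t (a * odd_part x * a') = 0" for a a'
    using x unfolding sandwich_kernel_def by blast+
  have "t (a * even_part (b * x) * a')
      = t ((a * even_part b) * even_part x * a') + t ((a * odd_part b) * odd_part x * a')"
    and "t (a * odd_part (b * x) * a')
      = t ((a * even_part b) * odd_part x * a') + t ((a * odd_part b) * even_part x * a')" for a a'
    by (simp_all add: even_part_mult odd_part_mult distrib_left distrib_right mult.assoc t_add)
  then show "b * x \<in> sandwich_kernel t" unfolding sandwich_kernel_def by (simp add: x0 x1)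
  have "t (a * even_part (x * b) * a')
      = t (a * even_part x * (even_part b * a')) + t (a * odd_part x * (odd_part b * a'))"
    and "t (a * odd_part (x * b) * a')
      = t (a * even_part x * (odd_part b * a')) + t (a * odd_part x * (even_part b * a'))" for a a'
    by (simp_all add: even_part_mult odd_part_mult distrib_left distrib_right mult.assoc t_add)
  then show "x * b \<in> sandwich_kernel t" unfolding sandwich_kernel_def by (simp add: x0 x1)
qed

lemma sandwich_kernel_graded_ideal:
  assumes t: "t \<in> mult_ops"
  shows "graded_ideal B0 B1 (sandwich_kernel t)"
  unfolding graded_ideal_def add_subgroup_def
proof (intro conjI ballI allI impI)
  have lin: "linear_over even_center t" using mult_ops_linear[OF t] .
  show "0 \<in> sandwich_kernel t"
    using parts_of_even[OF even_zero] linear_over_zero[OF lin] by (simp add: sandwich_kernel_def)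
  fix x assume x: "x \<in> sandwich_kernel t"
  then show "- x \<in> sandwich_kernel t"
    by (simp add: sandwich_kernel_def even_part_uminus odd_part_uminus linear_over_uminus[OF lin])
  show "a * x \<in> sandwich_kernel t" and "x * a \<in> sandwich_kernel t" for a
    using sandwich_kernel_mult[OF t x] by blast+
  fix y assume "y \<in> sandwich_kernel t"
  with x show "x + y \<in> sandwich_kernel t"
    using linear_overD(1)[OF lin]
    by (simp add: sandwich_kernel_def even_part_add odd_part_add distrib_left distrib_right)
next
  fix x x0 x1 assume x: "x \<in> sandwich_kernel t" and parts: "x0 \<in> B0" "x1 \<in> B1" "x = x0 + x1"
  have "t 0 = 0" using linear_over_zero[OF mult_ops_linear[OF t]] .
  then show "x0 \<in> sandwich_kernel t" and "x1 \<in> sandwich_kernel t"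
    using x parts_eqI[OF parts] parts_of_even[OF parts(1)] parts_of_odd[OF parts(2)]
    by (simp_all add: sandwich_kernel_def)
qed

end

section \<open>Simple superrings\<close>

locale simple_super_ring =
  fixes A0 A1 :: "'a::ring_1 set"
  assumes simple: "simple_superalgebra A0 A1"

sublocale simple_super_ring \<subseteq> super_ring A0 A1
  using simple by unfold_locales (simp add: simple_superalgebra_def)

context simple_super_ring
begin

lemma graded_ideal_cases: "graded_ideal A0 A1 I \<Longrightarrow> I = {0} \<or> I = UNIV"
  using simple by (simp add: simple_superalgebra_def)

lemma one_neq_zero: "(1::'a) \<noteq> 0"
  using simple by (auto simp: simple_superalgebra_def)

lemma mult_ops_orbit:
  assumes "w \<noteq> 0"
  shows "\<exists>f\<in>mult_ops. f w = a"
proof -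
  define J where "J = {f w | f. f \<in> mult_ops}"
  have J_closed: "f x \<in> J" if "x \<in> J" and "f \<in> mult_ops" for f x
  proof -
    obtain h where "h \<in> mult_ops" "x = h w" using \<open>x \<in> J\<close> unfolding J_def by blast
    then show ?thesis
      unfolding J_def using mult_ops.comp[OF \<open>f \<in> mult_ops\<close> \<open>h \<in> mult_ops\<close>] by auto
  qed
  have "graded_ideal A0 A1 J"
    unfolding graded_ideal_def add_subgroup_def
  proof (intro conjI ballI allI impI)
    have "(\<lambda>x. 0 * x) \<in> mult_ops" by (rule mult_ops.mult_left)
    then show "0 \<in> J" unfolding J_def by auto
    fix x assume x: "x \<in> J"
    show "- x \<in> J" using J_closed[OF x mult_ops.mult_left[of "- 1"]] by simp
    show "a * x \<in> J" and "x * a \<in> J" for a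
      using J_closed[OF x mult_ops.mult_left] J_closed[OF x mult_ops.mult_right] by simp_all
    fix y assume "y \<in> J"
    then show "x + y \<in> J" using x mult_ops.add unfolding J_def by force
  next
    fix x x0 x1 assume "x \<in> J" "x0 \<in> A0" "x1 \<in> A1" "x = x0 + x1"
    then show "x0 \<in> J" and "x1 \<in> J"
      using J_closed[OF \<open>x \<in> J\<close> mult_ops.even_proj] J_closed[OF \<open>x \<in> J\<close> mult_ops_odd_proj]
        parts_eqI[of x0 x1 x] by simp_all
  qed
  moreover have "w \<in> J" unfolding J_def using mult_ops_id by force
  ultimately have "J = UNIV" using graded_ideal_cases assms by blast
  then have "a \<in> J" by simp
  then show ?thesis unfolding J_def by blast
qed

lemma even_center_inverse:
  assumes c: "c \<in> even_center" and "c \<noteq> 0"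
  shows "\<exists>d\<in>even_center. d * c = 1"
proof -
  obtain f where f: "f \<in> mult_ops" "f c = 1" using mult_ops_orbit[OF \<open>c \<noteq> 0\<close>] by blast
  define d where "d = f 1"
  have cd: "c * d = 1"
    using f linear_overD(2)[OF mult_ops_linear[OF f(1)] c, of 1] by (simp add: d_def)
  moreover have dc: "d * c = 1" using c cd unfolding Int_iff center_iff by metis
  ultimately have "d \<in> center" using inverse_in_center c by blast
  have "c * odd_part d = 0"
    using parts_even_mult(2)[of c d] c cd parts_of_even[OF one_even] by simp
  then have "odd_part d = 0" using dc by (metis mult.assoc mult_1 mult_zero_right)
  then have "d \<in> A0" using even_odd_sum[of d] even_part_mem[of d] by simp
  then show ?thesis using \<open>d \<in> center\<close> dc by blast
qed

lemma span_over_dependent: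
  assumes I: "finite I" and j: "j \<in> I" and c: "\<forall>i\<in>I. c i \<in> even_center" "c j \<noteq> 0"
    and vanish: "(\<Sum>i\<in>I. c i * w i) = 0"
  shows "w j \<in> span_over even_center (I - {j}) w"
proof -
  obtain d where d: "d \<in> even_center" "d * c j = 1" using even_center_inverse c j by blast
  have "c j * w j = - (\<Sum>i\<in>I - {j}. c i * w i)"
    using vanish sum.remove[OF I j, of "\<lambda>i. c i * w i"] by (simp add: eq_neg_iff_add_eq_0)
  then have "d * (c j * w j) = (\<Sum>i\<in>I - {j}. (- (d * c i)) * w i)"
    by (simp add: sum_distrib_left sum_negf mult.assoc)
  then have "w j = (\<Sum>i\<in>I - {j}. (- (d * c i)) * w i)"
    using d(2) by (simp add: mult.assoc[symmetric])
  moreover have "\<forall>i\<in>I - {j}. - (d * c i) \<in> even_center"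
    using even_center_uminus even_center_mult d(1) c(1) by blast
  ultimately show ?thesis by (rule span_overI)
qed

lemma span_over_remove:
  assumes I: "finite I" and j: "j \<in> I" and "w j \<in> span_over even_center (I - {j}) w"
  shows "span_over even_center I w \<subseteq> span_over even_center (I - {j}) w"
proof
  fix y assume "y \<in> span_over even_center I w"
  then obtain e where e: "\<forall>i\<in>I. e i \<in> even_center" "y = (\<Sum>i\<in>I. e i * w i)"
    unfolding span_over_def by blast
  obtain b where b: "\<forall>i\<in>I - {j}. b i \<in> even_center" "w j = (\<Sum>i\<in>I - {j}. b i * w i)"
    using assms(3) unfolding span_over_def by blast
  have "y = e j * w j + (\<Sum>i\<in>I - {j}. e i * w i)"
    using e(2) sum.remove[OF I j] by simp
  also have "\<dots> = (\<Sum>i\<in>I - {j}. (e j * b i + e i) * w i)"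
    by (simp add: b(2) sum_distrib_left sum.distrib distrib_right mult.assoc)
  finally have "y = (\<Sum>i\<in>I - {j}. (e j * b i + e i) * w i)" .
  moreover have "\<forall>i\<in>I - {j}. e j * b i + e i \<in> even_center"
    using e(1) b(1) j by (intro ballI even_center_add even_center_mult) auto
  ultimately show "y \<in> span_over even_center (I - {j}) w" by (rule span_overI)
qed

lemma rank_reduction:
  assumes f: "f \<in> mult_ops" and I: "finite I" and g: "range g \<subseteq> span_over even_center I v"
    and "g x \<noteq> 0" and "f (g x) = 0"
  shows "\<exists>j\<in>I. range (\<lambda>y. f (g y)) \<subseteq> span_over even_center (I - {j}) (\<lambda>i. f (v i))"
proof -
  have lin: "linear_over even_center f" using mult_ops_linear[OF f] .
  obtain c where c: "\<forall>i\<in>I. c i \<in> even_center" "g x = (\<Sum>i\<in>I. c i * v i)"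
    using g unfolding span_over_def by blast
  obtain j where j: "j \<in> I" "c j \<noteq> 0"
    using c(2) \<open>g x \<noteq> 0\<close> by (metis (no_types, lifting) mult_zero_left sum.neutral)
  have "(\<Sum>i\<in>I. c i * f (v i)) = 0"
    using linear_over_sum[OF lin I c(1)] c(2) \<open>f (g x) = 0\<close> by simp
  then have "f (v j) \<in> span_over even_center (I - {j}) (\<lambda>i. f (v i))"
    using span_over_dependent[OF I j(1) c(1) j(2), where w = "\<lambda>i. f (v i)"] by simp
  then have "span_over even_center I (\<lambda>i. f (v i)) \<subseteq> span_over even_center (I - {j}) (\<lambda>i. f (v i))"
    using span_over_remove[OF I j(1), where w = "\<lambda>i. f (v i)"] by simp
  moreover have "f (g y) \<in> span_over even_center I (\<lambda>i. f (v i))" for y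
    using linear_over_image_span[OF lin I] g by blast
  ultimately show ?thesis using j(1) by blast
qed

lemma exists_minimal_rank_op:
  assumes "fin_dim_over even_center"
  obtains g x where "g \<in> mult_ops" and "g x \<noteq> 0"
    and "\<And>f y. f \<in> mult_ops \<Longrightarrow> f (g x) = 0 \<Longrightarrow> f (g y) = 0"
proof -
  define has_rank where "has_rank r \<longleftrightarrow> (\<exists>g\<in>mult_ops. (\<exists>x. g x \<noteq> 0) \<and>
      (\<exists>(I::'a set) v. finite I \<and> card I = r \<and> range g \<subseteq> span_over even_center I v))" for r
  obtain S where S: "finite S" "UNIV \<subseteq> span_over even_center S (\<lambda>s. s)"
    using assms fin_dim_over_iff by blast
  have "\<exists>(I::'a set) v. finite I \<and> card I = card S \<and> range (\<lambda>x. x) \<subseteq> span_over even_center I v"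
    using S by (intro exI[of _ S] exI[of _ "\<lambda>s. s"]) simp
  moreover have "\<exists>x::'a. x \<noteq> 0" using one_neq_zero by blast
  ultimately have "has_rank (card S)"
    unfolding has_rank_def by (intro bexI[OF _ mult_ops_id] conjI)
  define r where "r = (LEAST r. has_rank r)"
  have "has_rank r" unfolding r_def by (rule LeastI) fact
  then obtain g x and I :: "'a set" and v where g: "g \<in> mult_ops" "g x \<noteq> 0" "finite I" "card I = r"
      "range g \<subseteq> span_over even_center I v"
    unfolding has_rank_def by blast
  show ?thesis
  proof (rule that[OF g(1,2)])
    fix f y assume f: "f \<in> mult_ops" "f (g x) = 0"
    show "f (g y) = 0"
    proof (rule ccontr)
      assume "f (g y) \<noteq> 0"
      obtain j where j: "j \<in> I"
        "range (\<lambda>y. f (g y)) \<subseteq> span_over even_center (I - {j}) (\<lambda>i. f (v i))"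
        using rank_reduction[OF f(1) g(3) g(5) g(2) f(2)] by blast
      have "\<exists>(I'::'a set) v'. finite I' \<and> card I' = card (I - {j})
          \<and> range (\<lambda>y. f (g y)) \<subseteq> span_over even_center I' v'"
        using g(3) j(2) by (intro exI[of _ "I - {j}"] exI[of _ "\<lambda>i. f (v i)"]) simp
      moreover have "\<exists>y. f (g y) \<noteq> 0" using \<open>f (g y) \<noteq> 0\<close> by blast
      ultimately have "has_rank (card (I - {j}))"
        unfolding has_rank_def by (intro bexI[OF _ mult_ops.comp[OF f(1) g(1)]] conjI)
      moreover have "card (I - {j}) < r" using card_Diff1_less[OF g(3) j(1)] g(4) by simp
      ultimately show False unfolding r_def using not_less_Least by blast
    qed
  qed
qed

lemma exists_even_center_valued_op:
  assumes "fin_dim_over even_center"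
  obtains t y where "t \<in> mult_ops" and "\<And>x. t x \<in> even_center" and "t y \<noteq> 0"
proof -
  obtain g x where g: "g \<in> mult_ops" "g x \<noteq> 0"
    and kernel: "\<And>f y. f \<in> mult_ops \<Longrightarrow> f (g x) = 0 \<Longrightarrow> f (g y) = 0"
    using exists_minimal_rank_op[OF assms] by blast
  obtain n where n: "n \<in> mult_ops" "n (g x) = 1" using mult_ops_orbit[OF g(2)] by blast
  have agree: "f1 (g y) = f2 (g y)"
    if "f1 \<in> mult_ops" "f2 \<in> mult_ops" "f1 (g x) = f2 (g x)" for f1 f2 y
    using kernel[OF mult_ops_diff[OF that(1,2)]] that(3) by simp
  have "n (g y) \<in> even_center" for y
  proof -
    have "a * n (g y) = n (g y) * a" for a
      using agree[OF mult_ops.comp[OF mult_ops.mult_left[of a] n(1)]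
          mult_ops.comp[OF mult_ops.mult_right[of a] n(1)]] n(2) by simp
    moreover have "even_part (n (g y)) = n (g y)"
      using agree[OF mult_ops.comp[OF mult_ops.even_proj n(1)] n(1)] n(2) parts_of_even[OF one_even]
      by simp
    ultimately show ?thesis using even_part_mem[of "n (g y)"] unfolding Int_iff center_iff by simp
  qed
  then show ?thesis
    by (rule that[OF mult_ops.comp[OF n(1) g(1)], of x]) (use n(2) one_neq_zero in simp)
qed

lemma sandwich_kernel_trivial:
  assumes "t \<in> mult_ops" and "t y \<noteq> 0"
  shows "sandwich_kernel t = {0}"
proof -
  have "t (1 * even_part 1 * y) \<noteq> 0" using parts_of_even[OF one_even] \<open>t y \<noteq> 0\<close> by simp
  then have "1 \<notin> sandwich_kernel t" unfolding sandwich_kernel_def by blast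
  then show ?thesis using graded_ideal_cases[OF sandwich_kernel_graded_ideal[OF assms(1)]] by blast
qed

end

section \<open>Localization at central regular elements\<close>

locale central_localization =
  fixes Z :: "'b::ring_1 set" and \<phi> :: "'b \<Rightarrow> 'a::ring_1"
  assumes Z_central: "Z \<subseteq> center"
    and one_in_Z: "1 \<in> Z"
    and Z_mult_closed: "x \<in> Z \<Longrightarrow> y \<in> Z \<Longrightarrow> x * y \<in> Z"
    and Z_regular: "z \<in> Z \<Longrightarrow> z \<noteq> 0 \<Longrightarrow> z * b = 0 \<Longrightarrow> b = 0"
    and is_loc: "is_localization Z \<phi>"
begin

lemma
  shows phi_add: "\<phi> (x + y) = \<phi> x + \<phi> y"
    and phi_mult: "\<phi> (x * y) = \<phi> x * \<phi> y"
    and phi_one: "\<phi> 1 = 1"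
    and phi_inj: "inj \<phi>"
    and phi_Z_unit: "z \<in> Z - {0} \<Longrightarrow> \<exists>w. w * \<phi> z = 1 \<and> \<phi> z * w = 1"
    and fraction: "\<exists>b. \<exists>z\<in>Z - {0}. a * \<phi> z = \<phi> b"
  using is_loc unfolding is_localization_def by auto

lemma Z_commute:
  assumes "z \<in> Z"
  shows "x * z = z * x"
proof -
  have "z \<in> center" using assms Z_central by blast
  then show ?thesis unfolding center_iff by blast
qed

lemma phi_zero: "\<phi> 0 = 0"
  using phi_add[of 0 0] by simp

lemma phi_eq_iff: "\<phi> x = \<phi> y \<longleftrightarrow> x = y"
  using phi_inj by (auto simp: inj_def)

lemma phi_eq_0_iff: "\<phi> x = 0 \<longleftrightarrow> x = 0"
  using phi_eq_iff[of x 0] by (simp add: phi_zero)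

lemma Z_mult_nonzero: "z \<in> Z - {0} \<Longrightarrow> z' \<in> Z - {0} \<Longrightarrow> z * z' \<in> Z - {0}"
  using Z_mult_closed Z_regular by blast

lemma one_neq_zero: "(1::'b) \<noteq> 0"
proof
  assume "(1::'b) = 0"
  obtain z where "z \<in> Z - {0}" using fraction by blast
  moreover have "z = z * 1" by simp
  ultimately show False using \<open>1 = 0\<close> by simp
qed

lemma phi_in_loc_part: "b \<in> S \<Longrightarrow> \<phi> b \<in> loc_part Z \<phi> S"
  unfolding loc_part_def
  by (intro CollectI bexI[of _ b] bexI[of _ 1]) (simp_all add: phi_one one_in_Z one_neq_zero)

lemma phi_Z_central:
  assumes "z \<in> Z"
  shows "\<phi> z \<in> center"
proof -
  have "a * \<phi> z = \<phi> z * a" for a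
  proof -
    obtain b z' where z': "z' \<in> Z - {0}" "a * \<phi> z' = \<phi> b" using fraction by blast
    obtain w where w: "\<phi> z' * w = 1" using phi_Z_unit[OF z'(1)] by blast
    note commute = Z_commute[OF assms]
    have "\<phi> z * a * \<phi> z' = \<phi> (z * b)" using z'(2) by (simp add: phi_mult mult.assoc)
    also have "\<dots> = \<phi> (b * z)" using commute by simp
    also have "\<dots> = a * \<phi> (z' * z)" using z'(2) by (simp add: phi_mult mult.assoc[symmetric])
    also have "\<dots> = a * \<phi> z * \<phi> z'" using commute by (simp add: phi_mult[symmetric] mult.assoc)
    finally have "a * \<phi> z * \<phi> z' * w = \<phi> z * a * \<phi> z' * w" by simp
    then show ?thesis using w by (simp add: mult.assoc)
  qed
  then show ?thesis unfolding center_iff by blast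
qed

lemma center_if_phi_center:
  assumes "\<phi> b \<in> center"
  shows "b \<in> center"
proof -
  have "\<phi> (a * b) = \<phi> (b * a)" for a
    using assms unfolding center_iff by (simp add: phi_mult)
  then show ?thesis unfolding center_iff phi_eq_iff by blast
qed

lemma loc_part_Z_central:
  assumes "c \<in> loc_part Z \<phi> Z"
  shows "c \<in> center"
proof -
  obtain s z where sz: "s \<in> Z" "z \<in> Z - {0}" "c * \<phi> z = \<phi> s"
    using assms unfolding loc_part_def by blast
  obtain w where w: "w * \<phi> z = 1" "\<phi> z * w = 1" using phi_Z_unit[OF sz(2)] by blast
  have "c = \<phi> s * w" using sz(3) w(2) by (metis mult.assoc mult_1_right)
  moreover have "w \<in> center" using inverse_in_center[OF phi_Z_central w] sz(2) by blast
  ultimately show ?thesis using center_mult phi_Z_central[OF sz(1)] by simp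
qed

end

section \<open>The central closure\<close>

locale central_closure = B: super_ring B0 B1
  for B0 B1 :: "'b::ring_1 set" +
  fixes Z :: "'b set" and \<phi> :: "'b \<Rightarrow> 'a::ring_1"
  assumes Z_eq: "Z = center \<inter> B0"
    and regular: "\<forall>z\<in>Z. z \<noteq> 0 \<longrightarrow> (\<forall>b. z * b = 0 \<longrightarrow> b = 0)"
    and loc: "is_localization Z \<phi>"
    and simple: "simple_superalgebra (loc_part Z \<phi> B0) (loc_part Z \<phi> B1)"
begin

abbreviation "A0 \<equiv> loc_part Z \<phi> B0"
abbreviation "A1 \<equiv> loc_part Z \<phi> B1"

sublocale central_localization Z \<phi>
proof unfold_locales
  show "Z \<subseteq> center" unfolding Z_eq by (rule Int_lower1)
  show "1 \<in> Z" unfolding Z_eq by (rule B.even_center_one)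
  show "x * y \<in> Z" if "x \<in> Z" "y \<in> Z" for x y
    using that unfolding Z_eq by (rule B.even_center_mult)
  show "b = 0" if "z \<in> Z" "z \<noteq> 0" "z * b = 0" for z b
    using regular that by blast
qed (rule loc)

sublocale A: simple_super_ring A0 A1
  using simple by unfold_locales

lemma phi_parts: "A.even_part (\<phi> b) = \<phi> (B.even_part b)" "A.odd_part (\<phi> b) = \<phi> (B.odd_part b)"
  using A.parts_eqI[OF phi_in_loc_part[OF B.even_part_mem[of b]] phi_in_loc_part[OF B.odd_part_mem[of b]],
      of "\<phi> b"]
  by (simp_all add: phi_add[symmetric] B.even_odd_sum)

lemma even_if_phi_even:
  assumes "\<phi> b \<in> A0"
  shows "b \<in> B0"
proof -
  have "\<phi> (B.odd_part b) = 0" using A.parts_of_even[OF assms] phi_parts(2) by simp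
  then have "B.odd_part b = 0" by (simp add: phi_eq_0_iff)
  then show ?thesis using B.even_odd_sum[of b] B.even_part_mem[of b] by simp
qed

lemma loc_part_Z_eq: "loc_part Z \<phi> Z = A.even_center"
proof
  show "loc_part Z \<phi> Z \<subseteq> A.even_center"
    using loc_part_Z_central Z_eq unfolding loc_part_def by blast
  show "A.even_center \<subseteq> loc_part Z \<phi> Z"
  proof
    fix c assume c: "c \<in> A.even_center"
    obtain b z where bz: "z \<in> Z - {0}" "c * \<phi> z = \<phi> b" using fraction by blast
    have "\<phi> z \<in> A0" using bz(1) phi_in_loc_part Z_eq by blast
    then have "\<phi> b \<in> A0" using A.even_mult_even c bz(2) by force
    then have "b \<in> B0" by (rule even_if_phi_even)
    moreover have "\<phi> b \<in> center" using center_mult c phi_Z_central bz by force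
    then have "b \<in> center" by (rule center_if_phi_center)
    ultimately show "c \<in> loc_part Z \<phi> Z" unfolding loc_part_def using bz Z_eq by blast
  qed
qed

lemma phi_Z_even_center: "z \<in> Z \<Longrightarrow> \<phi> z \<in> A.even_center"
  using phi_in_loc_part loc_part_Z_eq by blast

lemma Z_if_phi_even_center: "\<phi> b \<in> A.even_center \<Longrightarrow> b \<in> Z"
  using even_if_phi_even center_if_phi_center Z_eq by blast

definition has_common_denominator :: "('a \<Rightarrow> 'a) \<Rightarrow> bool" where
  "has_common_denominator f \<longleftrightarrow> (\<exists>z\<in>Z - {0}. \<forall>b. \<phi> z * f (\<phi> b) \<in> range \<phi>)"

lemma has_common_denominator_mult_left: "has_common_denominator (\<lambda>x. a * x)"
proof -
  obtain s z where sz: "z \<in> Z - {0}" "a * \<phi> z = \<phi> s" using fraction by blast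
  have "\<phi> z * (a * \<phi> b) = \<phi> (s * b)" for b
    using phi_Z_central[of z] sz unfolding center_iff by (metis DiffD1 mult.assoc phi_mult)
  then show ?thesis unfolding has_common_denominator_def using sz(1) by blast
qed

lemma has_common_denominator_mult_right: "has_common_denominator (\<lambda>x. x * a)"
proof -
  obtain s z where sz: "z \<in> Z - {0}" "a * \<phi> z = \<phi> s" using fraction by blast
  have "\<phi> z * (\<phi> b * a) = \<phi> (b * s)" for b
    using phi_Z_central[of z] sz unfolding center_iff by (metis DiffD1 mult.assoc phi_mult)
  then show ?thesis unfolding has_common_denominator_def using sz(1) by blast
qed

lemma has_common_denominator_even_part: "has_common_denominator A.even_part"
proof -
  have "\<phi> 1 * A.even_part (\<phi> b) = \<phi> (B.even_part b)" for b by (simp add: phi_one phi_parts)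
  then show ?thesis unfolding has_common_denominator_def using one_in_Z one_neq_zero by blast
qed

lemma has_common_denominator_comp:
  assumes "f \<in> A.mult_ops" and "has_common_denominator f" and "has_common_denominator g"
  shows "has_common_denominator (\<lambda>x. f (g x))"
proof -
  obtain z1 where z1: "z1 \<in> Z - {0}" "\<And>b. \<phi> z1 * f (\<phi> b) \<in> range \<phi>"
    using assms(2) unfolding has_common_denominator_def by blast
  obtain z2 where z2: "z2 \<in> Z - {0}" "\<And>b. \<phi> z2 * g (\<phi> b) \<in> range \<phi>"
    using assms(3) unfolding has_common_denominator_def by blast
  have "\<phi> (z1 * z2) * f (g (\<phi> b)) \<in> range \<phi>" for b
  proof -
    obtain b2 where b2: "\<phi> z2 * g (\<phi> b) = \<phi> b2" using z2(2) by (metis rangeE)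
    have "\<phi> (z1 * z2) * f (g (\<phi> b)) = \<phi> z1 * f (\<phi> z2 * g (\<phi> b))"
      using linear_overD(2)[OF A.mult_ops_linear[OF assms(1)] phi_Z_even_center] z2(1)
      by (simp add: phi_mult mult.assoc)
    then show ?thesis using b2 z1(2) by simp
  qed
  then show ?thesis unfolding has_common_denominator_def using Z_mult_nonzero[OF z1(1) z2(1)] by blast
qed

lemma has_common_denominator_add:
  assumes "has_common_denominator f" and "has_common_denominator g"
  shows "has_common_denominator (\<lambda>x. f x + g x)"
proof -
  obtain z1 where z1: "z1 \<in> Z - {0}" "\<And>b. \<phi> z1 * f (\<phi> b) \<in> range \<phi>"
    using assms(1) unfolding has_common_denominator_def by blast
  obtain z2 where z2: "z2 \<in> Z - {0}" "\<And>b. \<phi> z2 * g (\<phi> b) \<in> range \<phi>"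
    using assms(2) unfolding has_common_denominator_def by blast
  have "\<phi> (z1 * z2) * (f (\<phi> b) + g (\<phi> b)) \<in> range \<phi>" for b
  proof -
    obtain b1 where b1: "\<phi> z1 * f (\<phi> b) = \<phi> b1" using z1(2) by (metis rangeE)
    obtain b2 where b2: "\<phi> z2 * g (\<phi> b) = \<phi> b2" using z2(2) by (metis rangeE)
    have "\<phi> (z1 * z2) = \<phi> z2 * \<phi> z1"
      using phi_Z_central[of z1] z1(1) unfolding center_iff by (simp add: phi_mult)
    then have "\<phi> (z1 * z2) * f (\<phi> b) = \<phi> z2 * (\<phi> z1 * f (\<phi> b))"
      by (simp add: mult.assoc)
    moreover have "\<phi> (z1 * z2) * g (\<phi> b) = \<phi> z1 * (\<phi> z2 * g (\<phi> b))"
      by (simp add: phi_mult mult.assoc)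
    ultimately have "\<phi> (z1 * z2) * (f (\<phi> b) + g (\<phi> b))
        = \<phi> z2 * (\<phi> z1 * f (\<phi> b)) + \<phi> z1 * (\<phi> z2 * g (\<phi> b))"
      by (simp add: distrib_left)
    also have "\<dots> = \<phi> (z2 * b1 + z1 * b2)" using b1 b2 by (simp add: phi_mult phi_add)
    finally show ?thesis by simp
  qed
  then show ?thesis unfolding has_common_denominator_def using Z_mult_nonzero[OF z1(1) z2(1)] by blast
qed

lemma mult_ops_common_denominator: "f \<in> A.mult_ops \<Longrightarrow> has_common_denominator f"
  by (induction rule: A.mult_ops.induct)
    (simp_all add: has_common_denominator_mult_left has_common_denominator_mult_right
      has_common_denominator_even_part has_common_denominator_comp has_common_denominator_add)

lemma spanning_image:
  assumes "fin_dim_over A.even_center"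
  obtains S :: "'a set" and e where "finite S" and "UNIV \<subseteq> span_over A.even_center S (\<lambda>s. \<phi> (e s))"
proof -
  obtain S where S: "finite S" "UNIV \<subseteq> span_over A.even_center S (\<lambda>s. s)"
    using assms fin_dim_over_iff by blast
  have "\<forall>s. \<exists>b z. z \<in> Z - {0} \<and> s * \<phi> z = \<phi> b" using fraction by blast
  then obtain e d where ed: "\<And>s. d s \<in> Z - {0}" "\<And>s. s * \<phi> (d s) = \<phi> (e s)" by metis
  have "\<exists>w\<in>A.even_center. w * \<phi> (d s) = 1" for s
    using A.even_center_inverse phi_Z_even_center ed(1) phi_eq_0_iff by blast
  then obtain w where w: "\<And>s. w s \<in> A.even_center" "\<And>s. w s * \<phi> (d s) = 1" by metis
  have s_eq: "s = w s * \<phi> (e s)" for s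
  proof -
    have "w s * \<phi> (e s) = w s * s * \<phi> (d s)" using ed(2) by (simp add: mult.assoc)
    also have "\<dots> = s * (w s * \<phi> (d s))" using w(1)[of s] unfolding Int_iff center_iff by (metis mult.assoc)
    finally show ?thesis using w(2) by simp
  qed
  have "a \<in> span_over A.even_center S (\<lambda>s. \<phi> (e s))" for a
  proof -
    obtain c where c: "\<forall>s\<in>S. c s \<in> A.even_center" "a = (\<Sum>s\<in>S. c s * s)"
      using S(2) unfolding span_over_def by blast
    have "a = (\<Sum>s\<in>S. (c s * w s) * \<phi> (e s))"
      unfolding c(2) by (rule sum.cong) (use s_eq in \<open>auto simp: mult.assoc\<close>)
    moreover have "\<forall>s\<in>S. c s * w s \<in> A.even_center" using c(1) w(1) A.even_center_mult by blast
    ultimately show ?thesis by (rule span_overI)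
  qed
  then show ?thesis using that S(1) by blast
qed

lemma Z_valued_form:
  assumes t: "t \<in> A.mult_ops" and t_even_center: "\<And>x. t x \<in> A.even_center"
  obtains \<tau> where "\<And>y. \<tau> y \<in> Z" and "\<And>y y'. \<tau> (y + y') = \<tau> y + \<tau> y'"
    and "\<And>z y. z \<in> Z \<Longrightarrow> \<tau> (z * y) = z * \<tau> y" and "\<And>y. \<tau> y = 0 \<Longrightarrow> t (\<phi> y) = 0"
proof -
  obtain z0 where z0: "z0 \<in> Z - {0}" "\<And>b. \<phi> z0 * t (\<phi> b) \<in> range \<phi>"
    using mult_ops_common_denominator[OF t] unfolding has_common_denominator_def by blast
  define \<tau> where "\<tau> y = inv \<phi> (\<phi> z0 * t (\<phi> y))" for y
  have phi_\<tau>: "\<phi> (\<tau> y) = \<phi> z0 * t (\<phi> y)" for y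
    unfolding \<tau>_def using z0(2) by (metis f_inv_into_f)
  have lin: "linear_over A.even_center t" by (rule A.mult_ops_linear[OF t])
  show ?thesis
  proof (rule that)
    show "\<tau> y \<in> Z" for y
      using Z_if_phi_even_center A.even_center_mult[OF phi_Z_even_center t_even_center] z0(1) phi_\<tau>
      by simp
    show "\<tau> (y + y') = \<tau> y + \<tau> y'" for y y'
      using phi_\<tau> linear_overD(1)[OF lin] by (simp add: phi_add distrib_left flip: phi_eq_iff)
    show "\<tau> (z * y) = z * \<tau> y" if "z \<in> Z" for z y
    proof -
      have "\<phi> (\<tau> (z * y)) = \<phi> z0 * (\<phi> z * t (\<phi> y))"
        using phi_\<tau> linear_overD(2)[OF lin phi_Z_even_center[OF that]] by (simp add: phi_mult)
      also have "\<dots> = \<phi> z * (\<phi> z0 * t (\<phi> y))"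
        using phi_Z_central[of z0] z0(1) unfolding center_iff by (metis DiffD1 mult.assoc)
      finally show ?thesis by (simp add: phi_\<tau> phi_mult flip: phi_eq_iff)
    qed
    show "t (\<phi> y) = 0" if "\<tau> y = 0" for y
    proof -
      obtain u where "u * \<phi> z0 = 1" using phi_Z_unit[OF z0(1)] by blast
      moreover have "\<phi> z0 * t (\<phi> y) = 0" using phi_\<tau>[of y] that by (simp add: phi_zero)
      ultimately show ?thesis by (metis mult.assoc mult_1 mult_zero_right)
    qed
  qed
qed

lemma sandwich_parts_Z_mult:
  assumes "z \<in> Z"
  shows "x * B.even_part (z * b) * x' = z * (x * B.even_part b * x')"
    and "x * B.odd_part (z * b) * x' = z * (x * B.odd_part b * x')"
proof -
  have z: "z \<in> B0" using assms Z_eq by blast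
  have "x * (z * y) * x' = z * (x * y * x')" for y
    using Z_commute[OF assms, of x] by (metis mult.assoc)
  then show "x * B.even_part (z * b) * x' = z * (x * B.even_part b * x')"
    and "x * B.odd_part (z * b) * x' = z * (x * B.odd_part b * x')"
    by (simp_all add: B.parts_even_mult[OF z])
qed

lemma sandwich_separates:
  assumes t: "t \<in> A.mult_ops" "t y \<noteq> 0"
    and S: "finite S" "UNIV \<subseteq> span_over A.even_center S (\<lambda>s. \<phi> (e s))"
    and even: "\<And>s s'. s \<in> S \<Longrightarrow> s' \<in> S \<Longrightarrow> t (\<phi> (e s * B.even_part b * e s')) = 0"
    and odd: "\<And>s s'. s \<in> S \<Longrightarrow> s' \<in> S \<Longrightarrow> t (\<phi> (e s * B.odd_part b * e s')) = 0"
  shows "b = 0"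
proof -
  have lin: "linear_over A.even_center t" using A.mult_ops_linear[OF t(1)] .
  have "t (a * \<phi> (B.even_part b) * a') = 0" for a a'
    by (rule linear_over_sandwich_span[OF lin Int_lower1 S]) (use even in \<open>simp add: phi_mult\<close>)
  moreover have "t (a * \<phi> (B.odd_part b) * a') = 0" for a a'
    by (rule linear_over_sandwich_span[OF lin Int_lower1 S]) (use odd in \<open>simp add: phi_mult\<close>)
  ultimately have "\<phi> b \<in> A.sandwich_kernel t" by (simp add: A.sandwich_kernel_def phi_parts)
  then show ?thesis using A.sandwich_kernel_trivial[OF t] by (simp add: phi_eq_0_iff)
qed

lemma embeds_into_free_module:
  assumes "fin_dim_over (loc_part Z \<phi> Z)"
  shows "\<exists>(n::nat) (f :: 'b \<Rightarrow> nat \<Rightarrow> 'b).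
           (\<forall>b i. i < n \<longrightarrow> f b i \<in> Z) \<and> (\<forall>b i. n \<le> i \<longrightarrow> f b i = 0) \<and>
           (\<forall>b c i. f (b + c) i = f b i + f c i) \<and>
           (\<forall>z\<in>Z. \<forall>b i. f (z * b) i = z * f b i) \<and>
           inj f"
proof -
  have fin_dim: "fin_dim_over A.even_center" using assms loc_part_Z_eq by simp
  obtain t y where t: "t \<in> A.mult_ops" "\<And>x. t x \<in> A.even_center" "t y \<noteq> 0"
    using A.exists_even_center_valued_op[OF fin_dim] by blast
  obtain \<tau> where \<tau>: "\<And>y. \<tau> y \<in> Z" "\<And>y y'. \<tau> (y + y') = \<tau> y + \<tau> y'"
    "\<And>z y. z \<in> Z \<Longrightarrow> \<tau> (z * y) = z * \<tau> y" "\<And>y. \<tau> y = 0 \<Longrightarrow> t (\<phi> y) = 0"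
    using Z_valued_form[OF t(1,2)] by blast
  obtain S :: "'a set" and e where S: "finite S" "UNIV \<subseteq> span_over A.even_center S (\<lambda>s. \<phi> (e s))"
    by (rule spanning_image[OF fin_dim])
  define part where "part p = (if p then B.even_part else B.odd_part)" for p
  have part_sandwich: "x * part p (z * b) * x' = z * (x * part p b * x')" if "z \<in> Z" for p z b x x'
    using sandwich_parts_Z_mult[OF that] by (simp add: part_def)
  define I where "I = (UNIV :: bool set) \<times> S \<times> S"
  define \<sigma> where "\<sigma> = (\<lambda>(p, s, s') b. \<tau> (e s * part p b * e s'))"
  show ?thesis
  proof (rule embedding_into_free_module[of I \<sigma>])
    show "finite I" using S(1) by (simp add: I_def)
    show "\<sigma> i b \<in> Z" for i b using \<tau>(1) by (simp add: \<sigma>_def split: prod.splits)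
    show "\<sigma> i (b + c) = \<sigma> i b + \<sigma> i c" for i b c using \<tau>(2)
      by (simp add: \<sigma>_def part_def B.even_part_add B.odd_part_add algebra_simps split: prod.splits)
    show "\<sigma> i (z * b) = z * \<sigma> i b" if "z \<in> Z" for i z b
      using \<tau>(3)[OF that] part_sandwich[OF that] by (simp add: \<sigma>_def split: prod.splits)
  next
    fix b assume vanish: "\<And>i. i \<in> I \<Longrightarrow> \<sigma> i b = 0"
    show "b = 0"
    proof (rule sandwich_separates[OF t(1,3) S])
      show "t (\<phi> (e s * B.even_part b * e s')) = 0" if "s \<in> S" "s' \<in> S" for s s'
        using \<tau>(4) vanish[of "(True, s, s')"] that by (simp add: I_def \<sigma>_def part_def)
      show "t (\<phi> (e s * B.odd_part b * e s')) = 0" if "s \<in> S" "s' \<in> S" for s s'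
        using \<tau>(4) vanish[of "(False, s, s')"] that by (simp add: I_def \<sigma>_def part_def)
    qed
  qed
qed

end

theorem theorem1:
  fixes B0 B1 :: "'b::ring_1 set" and Z :: "'b set" and \<phi> :: "'b \<Rightarrow> 'a::ring_1"
  assumes super: "superalgebra B0 B1"
    and Z_def: "Z = center \<inter> B0"
    and regular: "\<forall>z\<in>Z. z \<noteq> 0 \<longrightarrow> (\<forall>b. z * b = 0 \<longrightarrow> b = 0)"
    and loc: "is_localization Z \<phi>"
    and simple: "simple_superalgebra (loc_part Z \<phi> B0) (loc_part Z \<phi> B1)"
    and fd: "fin_dim_over (loc_part Z \<phi> Z)"
  shows "\<exists>(n::nat) (f :: 'b \<Rightarrow> nat \<Rightarrow> 'b).
           (\<forall>b i. i < n \<longrightarrow> f b i \<in> Z) \<and> (\<forall>b i. n \<le> i \<longrightarrow> f b i = 0) \<and>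
           (\<forall>b c i. f (b + c) i = f b i + f c i) \<and>
           (\<forall>z\<in>Z. \<forall>b i. f (z * b) i = z * f b i) \<and>
           inj f"
proof -
  interpret central_closure B0 B1 Z \<phi>
    using super Z_def regular loc simple by unfold_locales
  show ?thesis using embeds_into_free_module[OF fd] .
qed

end
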